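(* Let $\mathcal{A}$ be a cost automaton over a finite alphabet $\Sigma$ and let $L \subseteq \Sigma^*$ be a regular language. The winning condition for player B in the limitedness game with bound $\infty$ (for $\mathcal{A}$ and $L$) is an $\omega$-regular language, i.e. it is recognised by a nondeterministic Büchi automaton.
   Context: A cost automaton is a nondeterministic finite automaton (finite input alphabet, finite set of states, set of initial states, set of final states, finite set of transitions, each transition reading one input letter) additionally equipped with a finite totally ordered set of counters $0,\ldots,n$. For each counter $c$ there is a distinguished subset of transitions that increment $c$ and a distinguished subset of transitions that reset $c$; every transition that resets or increments counter $c$ must also reset all counters $0,\ldots,c-1$. A (finite or infinite) run is a consistent sequence of transitions (the target of each transition equals the source of the next) whose first transition starts in an initial state; a finite run is accepting if it ends in a final state. For sets of transitions $\delta_1,\delta_2,\ldots$, a run in $\delta_1\cdots\delta_i$ (resp. in $\delta_1\delta_2\cdots$) is a run whose $j$-th transition belongs to $\delta_j$ for every $j$. The limitedness game with bound $\infty$ is the following Gale-Stewart game (two players alternate for $\omega$ rounds, player A choosing a letter of his alphabet and then player B a letter of hers, producing an infinite word $a_1\delta_1a_2\delta_2\cdots$; player B wins iff this word lies in the winning condition). Player A's alphabet is $\Sigma$. Player B's alphabet is the set of all sets $\delta$ of transitions of $\mathcal{A}$ such that all transitions in $\delta$ read the same letter $a$ (formally, the union over $a\in\Sigma$ of the sets of sets of transitions reading $a$). The winning condition for player B is the set of sequences $a_1\delta_1a_2\delta_2\cdots$ such that for every $i$: (1) every transition in $\delta_i$ reads the letter $a_i$; (2') for every infinite run in $\delta_1\delta_2\cdots$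 and every counter $c$, if the run increments $c$ infinitely often then it resets $c$ infinitely often; (3) if $a_1\cdots a_i\in L$ then some run in $\delta_1\cdots\delta_i$ is accepting. *)

theory Defs
  imports Main
begin

record ('q, 'a) nfa =
  nfa_states :: "'q set"
  nfa_init   :: "'q set"
  nfa_trans  :: "('q \<times> 'a \<times> 'q) set"
  nfa_final  :: "'q set"

definition nfa_wf :: "'a set \<Rightarrow> ('q, 'a) nfa \<Rightarrow> bool" where
  "nfa_wf \<Sigma> N \<longleftrightarrow> finite (nfa_states N) \<and> nfa_init N \<subseteq> nfa_states N
     \<and> nfa_final N \<subseteq> nfa_states N
     \<and> nfa_trans N \<subseteq> nfa_states N \<times> \<Sigma> \<times> nfa_states N"

definition nfa_accepts :: "('q, 'a) nfa \<Rightarrow> 'a list \<Rightarrow> bool" where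
  "nfa_accepts N w \<longleftrightarrow> (\<exists>r :: nat \<Rightarrow> 'q. r 0 \<in> nfa_init N
     \<and> (\<forall>k < length w. (r k, w ! k, r (Suc k)) \<in> nfa_trans N)
     \<and> r (length w) \<in> nfa_final N)"

definition regular_lang :: "'a set \<Rightarrow> 'a list set \<Rightarrow> bool" where
  "regular_lang \<Sigma> L \<longleftrightarrow> (\<exists>N :: (nat, 'a) nfa. nfa_wf \<Sigma> N \<and> L = {w. nfa_accepts N w})"

record ('q, 'b) buchi =
  bu_states :: "'q set"
  bu_init   :: "'q set"
  bu_trans  :: "('q \<times> 'b \<times> 'q) set"
  bu_acc    :: "'q set"

definition buchi_wf :: "'b set \<Rightarrow> ('q, 'b) buchi \<Rightarrow> bool" where
  "buchi_wf \<Gamma> B \<longleftrightarrow> finite (bu_states B) \<and> bu_init B \<subseteq> bu_states B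
     \<and> bu_acc B \<subseteq> bu_states B
     \<and> bu_trans B \<subseteq> bu_states B \<times> \<Gamma> \<times> bu_states B"

definition buchi_accepts :: "('q, 'b) buchi \<Rightarrow> (nat \<Rightarrow> 'b) \<Rightarrow> bool" where
  "buchi_accepts B w \<longleftrightarrow> (\<exists>r :: nat \<Rightarrow> 'q. r 0 \<in> bu_init B
     \<and> (\<forall>k. (r k, w k, r (Suc k)) \<in> bu_trans B)
     \<and> (\<exists>\<^sub>\<infinity>k. r k \<in> bu_acc B))"

definition buchi_lang :: "('q, 'b) buchi \<Rightarrow> (nat \<Rightarrow> 'b) set" where
  "buchi_lang B = {w. buchi_accepts B w}"

text \<open>Transitions are elements of an abstract type 't, with source, letter and target.
  Counters are 0..ca_n. Transitions in ca_incr c increment counter c, those in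
  ca_reset c reset counter c.\<close>

record ('s, 'a, 't) cost_aut =
  ca_alph   :: "'a set"
  ca_states :: "'s set"
  ca_init   :: "'s set"
  ca_final  :: "'s set"
  ca_trans  :: "'t set"
  ca_src    :: "'t \<Rightarrow> 's"
  ca_lbl    :: "'t \<Rightarrow> 'a"
  ca_tgt    :: "'t \<Rightarrow> 's"
  ca_n      :: nat
  ca_incr   :: "nat \<Rightarrow> 't set"
  ca_reset  :: "nat \<Rightarrow> 't set"

definition cost_aut_wf :: "('s, 'a, 't) cost_aut \<Rightarrow> bool" where
  "cost_aut_wf A \<longleftrightarrow> finite (ca_alph A) \<and> finite (ca_states A)
     \<and> ca_init A \<subseteq> ca_states A \<and> ca_final A \<subseteq> ca_states A
     \<and> finite (ca_trans A)
     \<and> (\<forall>t \<in> ca_trans A. ca_src A t \<in> ca_states A \<and> ca_tgt A t \<in> ca_states A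
                          \<and> ca_lbl A t \<in> ca_alph A)
     \<and> (\<forall>c \<le> ca_n A. ca_incr A c \<subseteq> ca_trans A \<and> ca_reset A c \<subseteq> ca_trans A)
     \<and> (\<forall>c > ca_n A. ca_incr A c = {} \<and> ca_reset A c = {})
     \<and> (\<forall>c \<le> ca_n A. \<forall>t \<in> ca_incr A c \<union> ca_reset A c. \<forall>c' < c. t \<in> ca_reset A c')"

definition B_alph :: "('s, 'a, 't) cost_aut \<Rightarrow> 't set set" where
  "B_alph A = (\<Union>a \<in> ca_alph A. Pow {t \<in> ca_trans A. ca_lbl A t = a})"

text \<open>Infinite run in d 0, d 1, ... (0-indexed: the (j+1)-th transition lies in d j).\<close>
definition inf_run_in :: "('s, 'a, 't) cost_aut \<Rightarrow> (nat \<Rightarrow> 't set) \<Rightarrow> (nat \<Rightarrow> 't) \<Rightarrow> bool" where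
  "inf_run_in A d \<rho> \<longleftrightarrow> ca_src A (\<rho> 0) \<in> ca_init A
     \<and> (\<forall>j. \<rho> j \<in> d j)
     \<and> (\<forall>j. ca_tgt A (\<rho> j) = ca_src A (\<rho> (Suc j)))"

text \<open>Finite run in d 0 ... d (i-1), i.e. a list of i transitions, i \<ge> 1.\<close>
definition fin_run_in :: "('s, 'a, 't) cost_aut \<Rightarrow> (nat \<Rightarrow> 't set) \<Rightarrow> nat \<Rightarrow> 't list \<Rightarrow> bool" where
  "fin_run_in A d i ts \<longleftrightarrow> length ts = i \<and> ts \<noteq> []
     \<and> ca_src A (ts ! 0) \<in> ca_init A
     \<and> (\<forall>j < i. ts ! j \<in> d j)
     \<and> (\<forall>j. Suc j < i \<longrightarrow> ca_tgt A (ts ! j) = ca_src A (ts ! Suc j))"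

definition fin_run_accepting :: "('s, 'a, 't) cost_aut \<Rightarrow> 't list \<Rightarrow> bool" where
  "fin_run_accepting A ts \<longleftrightarrow> ca_tgt A (last ts) \<in> ca_final A"

text \<open>The interleaved infinite word a_1 d_1 a_2 d_2 ... (0-indexed sequences a, d).\<close>
definition interleave :: "(nat \<Rightarrow> 'a) \<Rightarrow> (nat \<Rightarrow> 'd) \<Rightarrow> nat \<Rightarrow> 'a + 'd" where
  "interleave a d k = (if even k then Inl (a (k div 2)) else Inr (d (k div 2)))"

definition game_alph :: "('s, 'a, 't) cost_aut \<Rightarrow> ('a + 't set) set" where
  "game_alph A = Inl ` ca_alph A \<union> Inr ` B_alph A"

definition win_inf :: "('s, 'a, 't) cost_aut \<Rightarrow> 'a list set \<Rightarrow> (nat \<Rightarrow> 'a + 't set) set" where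
  "win_inf A L = {interleave a d | a d.
      (\<forall>i. a i \<in> ca_alph A \<and> d i \<in> B_alph A)
    \<and> (\<forall>i. \<forall>t \<in> d i. ca_lbl A t = a i)
    \<and> (\<forall>\<rho>. inf_run_in A d \<rho> \<longrightarrow>
          (\<forall>c \<le> ca_n A. (\<exists>\<^sub>\<infinity>j. \<rho> j \<in> ca_incr A c) \<longrightarrow> (\<exists>\<^sub>\<infinity>j. \<rho> j \<in> ca_reset A c)))
    \<and> (\<forall>i \<ge> 1. map a [0..<i] \<in> L \<longrightarrow>
          (\<exists>ts. fin_run_in A d i ts \<and> fin_run_accepting A ts))}"

end

theory Submission
  imports Defs "HOL-Library.Ramsey" "HOL-Library.Infinite_Set"
begin

(* Condition (2') is the only part of the winning condition that is not a safety property.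
  Summarise a segment of the sequence of transition sets by the set of profiles (source, target,
  counters reset, counters incremented) of the paths through it. Profile sets compose, and there
  are finitely many of them, so by Ramsey's theorem there are infinitely many positions between
  any two of which the profile set is one and the same idempotent set tau. Condition (2') fails
  iff some state reachable at such a position lies on a loop of tau that increments a counter
  without resetting it: such a loop can be pumped into a bad run, and conversely a bad run
  revisits one state at two such positions after its last reset of the offending counter.
  The Buechi automaton guesses tau, runs the subset constructions for the language L and for the
  reachable states of the cost automaton, accumulates the profile set of the current segment,
  and accepts when it closes segments into checkpoints infinitely often. *)

lemma Ramsey_ordered_pairs:
  fixes g :: "nat \<Rightarrow> nat \<Rightarrow> 'c"
  assumes "infinite Z" and "finite C" and "\<And>x y. x \<in> Z \<Longrightarrow> y \<in> Z \<Longrightarrow> x < y \<Longrightarrow> g x y \<in> C"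
  obtains Y c where "Y \<subseteq> Z" "infinite Y" "\<And>x y. x \<in> Y \<Longrightarrow> y \<in> Y \<Longrightarrow> x < y \<Longrightarrow> g x y = c"
proof -
  obtain idx where idx: "bij_betw idx C {0..<card C}"
    using ex_bij_betw_finite_nat[OF assms(2)] by blast
  define f where "f X = idx (g (Min X) (Max X))" for X :: "nat set"
  have "f {x, y} < card C" if "x \<in> Z" "y \<in> Z" "x \<noteq> y" for x y
  proof -
    have "g (Min {x, y}) (Max {x, y}) \<in> C"
      using that assms(3) by (cases "x < y") (auto simp: min_def max_def)
    then show ?thesis using idx unfolding f_def bij_betw_def by auto
  qed
  then obtain Y t where Y: "Y \<subseteq> Z" "infinite Y" and t: "\<forall>x\<in>Y. \<forall>y\<in>Y. x \<noteq> y \<longrightarrow> f {x, y} = t"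
    using Ramsey2[OF assms(1)] by metis
  obtain x0 y0 where xy0: "x0 \<in> Y" "y0 \<in> Y" "x0 < y0"
    using Y(2) by (metis infinite_nat_iff_unbounded not_finite_existsD)
  have "g x y = g x0 y0" if "x \<in> Y" "y \<in> Y" "x < y" for x y
  proof -
    have f_pair: "f {u, v} = idx (g u v)" if "u < v" for u v
      using that by (simp add: f_def min_def max_def)
    have "idx (g x y) = idx (g x0 y0)"
      using t that xy0 f_pair by (metis less_irrefl)
    moreover have "g x y \<in> C" "g x0 y0 \<in> C" using that xy0 Y(1) assms(3) by auto
    ultimately show ?thesis using idx unfolding bij_betw_def inj_on_def by blast
  qed
  then show thesis using that Y by blast
qed

lemma INFM_nat_div_2: "(\<exists>\<^sub>\<infinity>k. P (k div 2)) \<longleftrightarrow> (\<exists>\<^sub>\<infinity>m::nat. P m)"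
  unfolding INFM_nat
proof (intro iffI allI)
  fix M
  assume "\<forall>M. \<exists>k>M. P (k div 2)"
  then obtain k where "2 * M + 1 < k" "P (k div 2)" by blast
  moreover have "M < k div 2" using calculation(1) by presburger
  ultimately show "\<exists>m>M. P m" by blast
next
  fix M
  assume "\<forall>M. \<exists>m>M. P m"
  then obtain m where "M < m" "P m" by blast
  then show "\<exists>k>M. P (k div 2)" by (intro exI[of _ "2 * m"]) simp
qed

definition prev_in :: "nat set \<Rightarrow> nat \<Rightarrow> nat" where
  "prev_in H m = Max {h \<in> H. h \<le> m}"

definition next_in :: "nat set \<Rightarrow> nat \<Rightarrow> nat" where
  "next_in H h = (LEAST h'. h' \<in> H \<and> h < h')"

lemma prev_in:
  assumes "h \<in> H" "h \<le> m"
  shows "prev_in H m \<in> H" "h \<le> prev_in H m" "prev_in H m \<le> m"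
proof -
  have fin: "finite {h \<in> H. h \<le> m}" by (rule finite_subset[of _ "{..m}"]) auto
  have "h \<in> {h \<in> H. h \<le> m}" using assms by blast
  then show "prev_in H m \<in> H" "h \<le> prev_in H m" "prev_in H m \<le> m"
    using Max_in[OF fin] Max_ge[OF fin] unfolding prev_in_def by blast+
qed

lemma prev_in_self: "m \<in> H \<Longrightarrow> prev_in H m = m"
  using prev_in[of m H m] by simp

lemma prev_in_Suc:
  assumes "h \<in> H" "h \<le> m" "Suc m \<notin> H"
  shows "prev_in H (Suc m) = prev_in H m"
proof (rule antisym)
  have "prev_in H (Suc m) \<in> H" "prev_in H (Suc m) \<le> Suc m"
    using prev_in[of h H "Suc m"] assms by simp_all
  then have "prev_in H (Suc m) \<le> m" using assms(3) le_Suc_eq by auto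
  then show "prev_in H (Suc m) \<le> prev_in H m"
    using prev_in(2) \<open>prev_in H (Suc m) \<in> H\<close> by blast
  show "prev_in H m \<le> prev_in H (Suc m)"
    using prev_in[OF assms(1,2)] prev_in(2)[of "prev_in H m" H "Suc m"] by simp
qed

lemma next_in:
  assumes "infinite H"
  shows "next_in H h \<in> H" "h < next_in H h"
proof -
  obtain h' where "h' \<in> H" "h < h'" using assms by (meson infinite_nat_iff_unbounded)
  then show "next_in H h \<in> H" "h < next_in H h"
    unfolding next_in_def by (metis (mono_tags, lifting) LeastI)+
qed

lemma prev_in_eqI:
  assumes "infinite H" "h \<in> H" "h \<le> m" "m < next_in H h"
  shows "prev_in H m = h"
proof -
  have "\<not> h < prev_in H m"
  proof
    assume "h < prev_in H m"
    then have "next_in H h \<le> prev_in H m"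
      unfolding next_in_def using prev_in(1)[OF assms(2,3)] by (simp add: Least_le)
    then show False using prev_in(3)[OF assms(2,3)] assms(4) by simp
  qed
  then show ?thesis using prev_in(2)[OF assms(2,3)] by simp
qed

lemma less_next_in_prev_in:
  assumes "infinite H"
  shows "m < next_in H (prev_in H m)"
proof (rule ccontr)
  let ?h = "prev_in H m"
  assume "\<not> m < next_in H ?h"
  then have "next_in H ?h \<le> prev_in H m"
    using prev_in(2)[OF next_in(1)[OF assms(1)], of ?h m] by simp
  then show False using next_in(2)[OF assms(1), of ?h] by simp
qed

section \<open>Subset construction and renaming of Buechi automata\<close>

definition nfa_post :: "('q, 'a) nfa \<Rightarrow> 'q set \<Rightarrow> 'a \<Rightarrow> 'q set" where
  "nfa_post N P x = {q'. \<exists>q \<in> P. (q, x, q') \<in> nfa_trans N}"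

fun nfa_reach :: "('q, 'a) nfa \<Rightarrow> (nat \<Rightarrow> 'a) \<Rightarrow> nat \<Rightarrow> 'q set" where
  "nfa_reach N a 0 = nfa_init N"
| "nfa_reach N a (Suc m) = nfa_post N (nfa_reach N a m) (a m)"

lemma nfa_reach_iff:
  "q \<in> nfa_reach N a m \<longleftrightarrow>
     (\<exists>r. r 0 \<in> nfa_init N \<and> (\<forall>k<m. (r k, a k, r (Suc k)) \<in> nfa_trans N) \<and> r m = q)"
proof (induction m arbitrary: q)
  case 0
  then show ?case by auto
next
  case (Suc m)
  show ?case
  proof
    assume "q \<in> nfa_reach N a (Suc m)"
    then obtain q0 r where "(q0, a m, q) \<in> nfa_trans N" "r 0 \<in> nfa_init N"
      "\<forall>k<m. (r k, a k, r (Suc k)) \<in> nfa_trans N" "r m = q0"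
      using Suc.IH by (auto simp: nfa_post_def)
    then show "\<exists>r. r 0 \<in> nfa_init N \<and> (\<forall>k<Suc m. (r k, a k, r (Suc k)) \<in> nfa_trans N) \<and> r (Suc m) = q"
      by (intro exI[of _ "r(Suc m := q)"]) (auto simp: less_Suc_eq)
  next
    assume "\<exists>r. r 0 \<in> nfa_init N \<and> (\<forall>k<Suc m. (r k, a k, r (Suc k)) \<in> nfa_trans N) \<and> r (Suc m) = q"
    then obtain r where "r 0 \<in> nfa_init N" "\<forall>k<Suc m. (r k, a k, r (Suc k)) \<in> nfa_trans N" "r (Suc m) = q"
      by blast
    moreover from this have "r m \<in> nfa_reach N a m" using Suc.IH by auto
    ultimately show "q \<in> nfa_reach N a (Suc m)" by (auto simp: nfa_post_def)
  qed
qed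

lemma nfa_accepts_prefix_iff:
  "nfa_accepts N (map a [0..<m]) \<longleftrightarrow> nfa_reach N a m \<inter> nfa_final N \<noteq> {}"
proof -
  have "nfa_accepts N (map a [0..<m]) \<longleftrightarrow> (\<exists>q. q \<in> nfa_reach N a m \<and> q \<in> nfa_final N)"
    unfolding nfa_accepts_def nfa_reach_iff by auto
  then show ?thesis by blast
qed

lemma nfa_reach_subset: "nfa_wf \<Sigma> N \<Longrightarrow> nfa_reach N a m \<subseteq> nfa_states N"
  by (induction m) (auto simp: nfa_wf_def nfa_post_def)

lemma buchi_nat_states:
  fixes B :: "('q, 'b) buchi"
  assumes wf: "buchi_wf \<Gamma> B"
  obtains B' :: "(nat, 'b) buchi" where "buchi_wf \<Gamma> B'" "buchi_lang B' = buchi_lang B"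
proof -
  let ?S = "bu_states B"
  have fS: "finite ?S" and iS: "bu_init B \<subseteq> ?S" and aS: "bu_acc B \<subseteq> ?S"
    and tS: "bu_trans B \<subseteq> ?S \<times> \<Gamma> \<times> ?S"
    using wf unfolding buchi_wf_def by blast+
  obtain f :: "'q \<Rightarrow> nat" where inj: "inj_on f ?S"
    using finite_imp_inj_to_nat_seg[OF fS] by blast
  define B' :: "(nat, 'b) buchi" where "B' = \<lparr>bu_states = f ` ?S, bu_init = f ` bu_init B,
     bu_trans = (\<lambda>(q, x, q'). (f q, x, f q')) ` bu_trans B, bu_acc = f ` bu_acc B\<rparr>"
  have "buchi_accepts B' w" if acc: "buchi_accepts B w" for w
  proof -
    obtain r where "r 0 \<in> bu_init B" "\<forall>k. (r k, w k, r (Suc k)) \<in> bu_trans B" "\<exists>\<^sub>\<infinity>k. r k \<in> bu_acc B"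
      using acc unfolding buchi_accepts_def by blast
    then show ?thesis
      unfolding buchi_accepts_def B'_def
      by (intro exI[of _ "f \<circ> r"]) (force elim: INFM_mono intro: image_eqI[of _ _ "(r _, w _, r (Suc _))"])
  qed
  moreover have "buchi_accepts B w" if acc': "buchi_accepts B' w" for w
  proof -
    let ?g = "inv_into ?S f"
    have gf: "?g (f q) = q" if "q \<in> ?S" for q using inj that by simp
    obtain r where r: "r 0 \<in> bu_init B'" "\<forall>k. (r k, w k, r (Suc k)) \<in> bu_trans B'"
      "\<exists>\<^sub>\<infinity>k. r k \<in> bu_acc B'"
      using acc' unfolding buchi_accepts_def by blast
    have "(?g \<circ> r) 0 \<in> bu_init B" using r(1) gf iS unfolding B'_def by auto
    moreover have "((?g \<circ> r) k, w k, (?g \<circ> r) (Suc k)) \<in> bu_trans B" for k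
      using spec[OF r(2), of k] gf tS unfolding B'_def by fastforce
    moreover have "\<exists>\<^sub>\<infinity>k. (?g \<circ> r) k \<in> bu_acc B"
      using r(3) by (rule INFM_mono) (use gf aS in \<open>auto simp: B'_def\<close>)
    ultimately show ?thesis unfolding buchi_accepts_def by blast
  qed
  moreover have "buchi_wf \<Gamma> B'"
    unfolding buchi_wf_def B'_def using fS iS aS tS by auto
  ultimately show thesis using that unfolding buchi_lang_def by blast
qed

section \<open>Profiles of path segments\<close>

lemma cost_aut_wf_finite:
  "cost_aut_wf A \<Longrightarrow> finite (ca_alph A) \<and> finite (ca_states A) \<and> finite (ca_trans A)"
  unfolding cost_aut_wf_def by blast

lemma cost_aut_wf_trans:
  "cost_aut_wf A \<Longrightarrow> t \<in> ca_trans A \<Longrightarrow>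
     ca_src A t \<in> ca_states A \<and> ca_tgt A t \<in> ca_states A \<and> ca_lbl A t \<in> ca_alph A"
  unfolding cost_aut_wf_def by blast

lemma cost_aut_wf_counter:
  assumes "cost_aut_wf A" "t \<in> ca_incr A c \<union> ca_reset A c"
  shows "c \<le> ca_n A"
proof (rule ccontr)
  assume "\<not> c \<le> ca_n A"
  then have "ca_incr A c = {} \<and> ca_reset A c = {}" using assms(1) unfolding cost_aut_wf_def by simp
  then show False using assms(2) by blast
qed

(* Source, target, counters reset and counters incremented along a path segment. *)
type_synonym 's profile = "'s \<times> 's \<times> nat set \<times> nat set"

definition prof_comp :: "'s profile set \<Rightarrow> 's profile set \<Rightarrow> 's profile set" where
  "prof_comp X Y = {(x, z, R1 \<union> R2, I1 \<union> I2) | x y z R1 R2 I1 I2.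
     (x, y, R1, I1) \<in> X \<and> (y, z, R2, I2) \<in> Y}"

lemma prof_compI: "(x, y, R1, I1) \<in> X \<Longrightarrow> (y, z, R2, I2) \<in> Y \<Longrightarrow> (x, z, R1 \<union> R2, I1 \<union> I2) \<in> prof_comp X Y"
  unfolding prof_comp_def by blast

lemma prof_compE:
  assumes "e \<in> prof_comp X Y"
  obtains x y z R1 R2 I1 I2 where "(x, y, R1, I1) \<in> X" "(y, z, R2, I2) \<in> Y" "e = (x, z, R1 \<union> R2, I1 \<union> I2)"
  using assms unfolding prof_comp_def by blast

lemma prof_comp_assoc: "prof_comp (prof_comp X Y) Z = prof_comp X (prof_comp Y Z)"
  by (auto elim!: prof_compE) (metis Un_assoc prof_compI)+

lemma prof_comp_Un_left: "prof_comp (X \<union> Y) Z = prof_comp X Z \<union> prof_comp Y Z"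
  by (auto elim!: prof_compE intro: prof_compI)

lemma prof_comp_mono: "X \<subseteq> X' \<Longrightarrow> Y \<subseteq> Y' \<Longrightarrow> prof_comp X Y \<subseteq> prof_comp X' Y'"
  by (auto elim!: prof_compE intro!: prof_compI)

definition unbounded_loop_states :: "'s profile set \<Rightarrow> 's set" where
  "unbounded_loop_states \<tau> = {s. \<exists>R I. (s, s, R, I) \<in> \<tau> \<and> \<not> I \<subseteq> R}"

datatype 'x phase = Initial | Checkpoint | Segment 'x

(* One step of the checkpoint monitor for the guessed profile set tau, reading the profiles S of
  the next transition set, with Q the states reachable after it; Segment X records the profiles
  of the segment since the last checkpoint. *)
fun phase_step :: "'s profile set \<Rightarrow> 's set \<Rightarrow> 's profile set
    \<Rightarrow> 's profile set phase \<Rightarrow> 's profile set phase \<Rightarrow> bool" where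
  "phase_step \<tau> Q S Initial ph \<longleftrightarrow>
     ph = Initial \<or> ph = Checkpoint \<and> Q \<inter> unbounded_loop_states \<tau> = {}"
| "phase_step \<tau> Q S Checkpoint ph \<longleftrightarrow>
     ph = Segment S \<or> S = \<tau> \<and> ph = Checkpoint \<and> Q \<inter> unbounded_loop_states \<tau> = {}"
| "phase_step \<tau> Q S (Segment X) ph \<longleftrightarrow>
     ph = Segment (prof_comp X S) \<or> prof_comp X S = \<tau> \<and> ph = Checkpoint \<and> Q \<inter> unbounded_loop_states \<tau> = {}"

context
  fixes A :: "('s, 'a, 't) cost_aut"
begin

definition tr_profile :: "'t \<Rightarrow> 's profile" where
  "tr_profile t = (ca_src A t, ca_tgt A t, {c. t \<in> ca_reset A c}, {c. t \<in> ca_incr A c})"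

definition seg_path :: "(nat \<Rightarrow> 't set) \<Rightarrow> nat \<Rightarrow> nat \<Rightarrow> (nat \<Rightarrow> 't) \<Rightarrow> bool" where
  "seg_path d i j p \<longleftrightarrow> (\<forall>m \<in> {i..<j}. p m \<in> d m)
     \<and> (\<forall>m. i \<le> m \<longrightarrow> Suc m < j \<longrightarrow> ca_tgt A (p m) = ca_src A (p (Suc m)))"

definition seg_resets :: "(nat \<Rightarrow> 't) \<Rightarrow> nat \<Rightarrow> nat \<Rightarrow> nat set" where
  "seg_resets p i j = (\<Union>m \<in> {i..<j}. {c. p m \<in> ca_reset A c})"

definition seg_incrs :: "(nat \<Rightarrow> 't) \<Rightarrow> nat \<Rightarrow> nat \<Rightarrow> nat set" where
  "seg_incrs p i j = (\<Union>m \<in> {i..<j}. {c. p m \<in> ca_incr A c})"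

definition seg_profile :: "(nat \<Rightarrow> 't) \<Rightarrow> nat \<Rightarrow> nat \<Rightarrow> 's profile" where
  "seg_profile p i j = (ca_src A (p i), ca_tgt A (p (j - 1)), seg_resets p i j, seg_incrs p i j)"

definition seg_profiles :: "(nat \<Rightarrow> 't set) \<Rightarrow> nat \<Rightarrow> nat \<Rightarrow> 's profile set" where
  "seg_profiles d i j = {seg_profile p i j | p. i < j \<and> seg_path d i j p}"

lemma seg_path_mono: "seg_path d i j p \<Longrightarrow> i \<le> i' \<Longrightarrow> j' \<le> j \<Longrightarrow> seg_path d i' j' p"
  unfolding seg_path_def by auto

lemma seg_path_Suc:
  assumes p: "seg_path d i j p" and t: "t \<in> d j" "ca_tgt A (p (j - 1)) = ca_src A t" and "i < j"
  shows "seg_path d i (Suc j) (p(j := t))"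
  unfolding seg_path_def
proof (intro conjI ballI allI impI)
  fix m assume "m \<in> {i..<Suc j}"
  then show "(p(j := t)) m \<in> d m" using p t unfolding seg_path_def by (cases "m = j") auto
next
  fix m assume m: "i \<le> m" "Suc m < Suc j"
  show "ca_tgt A ((p(j := t)) m) = ca_src A ((p(j := t)) (Suc m))"
  proof (cases "Suc m = j")
    case True
    then show ?thesis using t by auto
  next
    case False
    then show ?thesis using p m unfolding seg_path_def by auto
  qed
qed

lemma seg_path_last:
  assumes "seg_path d i (Suc j) p" "i < j"
  shows "ca_tgt A (p (j - 1)) = ca_src A (p j)"
proof -
  have "ca_tgt A (p (j - 1)) = ca_src A (p (Suc (j - 1)))"
    using assms unfolding seg_path_def by simp
  then show ?thesis using assms(2) by simp
qed

lemma seg_profile_upd_Suc: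
  "i < j \<Longrightarrow> seg_profile (p(j := t)) i (Suc j) = (ca_src A (p i), ca_tgt A t,
     seg_resets p i j \<union> {c. t \<in> ca_reset A c}, seg_incrs p i j \<union> {c. t \<in> ca_incr A c})"
  unfolding seg_profile_def seg_resets_def seg_incrs_def by (auto simp: atLeastLessThanSuc)

lemma seg_profiles_Suc_self: "seg_profiles d j (Suc j) = tr_profile ` d j"
proof (intro equalityI subsetI)
  fix e assume "e \<in> seg_profiles d j (Suc j)"
  then obtain p where "seg_path d j (Suc j) p" "e = seg_profile p j (Suc j)"
    unfolding seg_profiles_def by blast
  then show "e \<in> tr_profile ` d j"
    unfolding seg_path_def seg_profile_def seg_resets_def seg_incrs_def tr_profile_def by auto
next
  fix e assume "e \<in> tr_profile ` d j"
  then obtain t where "t \<in> d j" "e = tr_profile t" by blast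
  then have "seg_path d j (Suc j) (\<lambda>_. t)" "e = seg_profile (\<lambda>_. t) j (Suc j)"
    unfolding seg_path_def seg_profile_def seg_resets_def seg_incrs_def tr_profile_def by auto
  then show "e \<in> seg_profiles d j (Suc j)" unfolding seg_profiles_def by blast
qed

lemma seg_profiles_Suc:
  assumes "i < j"
  shows "seg_profiles d i (Suc j) = prof_comp (seg_profiles d i j) (tr_profile ` d j)"
proof (intro equalityI subsetI)
  fix e assume "e \<in> seg_profiles d i (Suc j)"
  then obtain p where p: "seg_path d i (Suc j) p" "e = seg_profile p i (Suc j)"
    unfolding seg_profiles_def by blast
  have "seg_path d i j p" using seg_path_mono[OF p(1) order_refl] by simp
  then have e1: "seg_profile p i j \<in> seg_profiles d i j" using assms unfolding seg_profiles_def by blast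
  have "p j \<in> d j" using p(1) assms unfolding seg_path_def by simp
  then have e2: "(ca_tgt A (p (j - 1)), ca_tgt A (p j), {c. p j \<in> ca_reset A c}, {c. p j \<in> ca_incr A c})
      \<in> tr_profile ` d j"
    unfolding seg_path_last[OF p(1) assms] tr_profile_def by (rule rev_image_eqI) simp
  have "seg_profile (p(j := p j)) i (Suc j) \<in> prof_comp (seg_profiles d i j) (tr_profile ` d j)"
    unfolding seg_profile_upd_Suc[OF assms] using prof_compI[OF e1[unfolded seg_profile_def] e2] .
  then show "e \<in> prof_comp (seg_profiles d i j) (tr_profile ` d j)"
    using p(2) by simp
next
  fix e assume "e \<in> prof_comp (seg_profiles d i j) (tr_profile ` d j)"
  then obtain p t where p: "seg_path d i j p" and t: "t \<in> d j" "ca_tgt A (p (j - 1)) = ca_src A t"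
    and e: "e = (ca_src A (p i), ca_tgt A t, seg_resets p i j \<union> {c. t \<in> ca_reset A c},
                 seg_incrs p i j \<union> {c. t \<in> ca_incr A c})"
    unfolding seg_profiles_def seg_profile_def tr_profile_def by (elim prof_compE) auto
  then have "e = seg_profile (p(j := t)) i (Suc j)"
    using seg_profile_upd_Suc[OF assms] by simp
  then show "e \<in> seg_profiles d i (Suc j)"
    using seg_path_Suc[OF p t assms] assms unfolding seg_profiles_def by auto
qed

lemma seg_profiles_split:
  assumes "i < j" "j < k"
  shows "seg_profiles d i k = prof_comp (seg_profiles d i j) (seg_profiles d j k)"
  using assms(2)
proof (induction k rule: less_induct)
  case (less k)
  then obtain k' where k: "k = Suc k'" "j \<le> k'" by (cases k) auto
  show ?case
  proof (cases "j = k'")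
    case True
    then show ?thesis using k seg_profiles_Suc[OF assms(1)] seg_profiles_Suc_self by simp
  next
    case False
    then have "j < k'" using k by simp
    then show ?thesis
      using k less.IH[of k'] seg_profiles_Suc[of i k' d] seg_profiles_Suc[of j k' d] assms(1)
      by (simp add: prof_comp_assoc)
  qed
qed

definition post :: "'s set \<Rightarrow> 't set \<Rightarrow> 's set" where
  "post Q D = {ca_tgt A t | t. t \<in> D \<and> ca_src A t \<in> Q}"

fun reach :: "(nat \<Rightarrow> 't set) \<Rightarrow> nat \<Rightarrow> 's set" where
  "reach d 0 = ca_init A"
| "reach d (Suc m) = post (reach d m) (d m)"

lemma inf_run_in_iff_seg_path:
  "inf_run_in A d \<rho> \<longleftrightarrow> ca_src A (\<rho> 0) \<in> ca_init A \<and> (\<forall>j. seg_path d 0 j \<rho>)"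
proof
  assume "ca_src A (\<rho> 0) \<in> ca_init A \<and> (\<forall>j. seg_path d 0 j \<rho>)"
  then show "inf_run_in A d \<rho>"
    unfolding inf_run_in_def seg_path_def by (metis atLeastLessThan_iff lessI zero_le)
qed (simp add: inf_run_in_def seg_path_def)

lemma reach_Suc_iff:
  "s \<in> reach d (Suc m) \<longleftrightarrow>
     (\<exists>p. seg_path d 0 (Suc m) p \<and> ca_src A (p 0) \<in> ca_init A \<and> ca_tgt A (p m) = s)"
proof (induction m arbitrary: s)
  case 0
  show ?case
  proof
    assume "s \<in> reach d (Suc 0)"
    then obtain t where "t \<in> d 0" "ca_src A t \<in> ca_init A" "s = ca_tgt A t" by (auto simp: post_def)
    then show "\<exists>p. seg_path d 0 (Suc 0) p \<and> ca_src A (p 0) \<in> ca_init A \<and> ca_tgt A (p 0) = s"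
      by (intro exI[of _ "\<lambda>_. t"]) (simp add: seg_path_def)
  qed (auto simp: post_def seg_path_def)
next
  case (Suc m)
  show ?case
  proof
    assume "s \<in> reach d (Suc (Suc m))"
    then obtain t where t: "t \<in> d (Suc m)" "ca_src A t \<in> reach d (Suc m)" "s = ca_tgt A t"
      by (auto simp: post_def)
    then obtain p where p: "seg_path d 0 (Suc m) p" "ca_src A (p 0) \<in> ca_init A" "ca_tgt A (p m) = ca_src A t"
      using Suc.IH by blast
    then show "\<exists>p. seg_path d 0 (Suc (Suc m)) p \<and> ca_src A (p 0) \<in> ca_init A \<and> ca_tgt A (p (Suc m)) = s"
      using seg_path_Suc[OF p(1) t(1)] t(3) by (intro exI[of _ "p(Suc m := t)"]) simp
  next
    assume "\<exists>p. seg_path d 0 (Suc (Suc m)) p \<and> ca_src A (p 0) \<in> ca_init A \<and> ca_tgt A (p (Suc m)) = s"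
    then obtain p where p: "seg_path d 0 (Suc (Suc m)) p" "ca_src A (p 0) \<in> ca_init A" "ca_tgt A (p (Suc m)) = s"
      by blast
    have "seg_path d 0 (Suc m) p" using seg_path_mono[OF p(1) order_refl] by simp
    then have "ca_tgt A (p m) \<in> reach d (Suc m)" using Suc.IH p(2) by blast
    moreover have "ca_tgt A (p m) = ca_src A (p (Suc m))" "p (Suc m) \<in> d (Suc m)"
      using p(1) unfolding seg_path_def by auto
    ultimately have "s \<in> post (reach d (Suc m)) (d (Suc m))" using p(3) unfolding post_def by auto
    then show "s \<in> reach d (Suc (Suc m))" by simp
  qed
qed

lemma inf_run_in_reach:
  assumes "inf_run_in A d \<rho>"
  shows "ca_src A (\<rho> m) \<in> reach d m"
proof (cases m)
  case 0
  then show ?thesis using assms by (simp add: inf_run_in_def)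
next
  case (Suc k)
  have "seg_path d 0 (Suc k) \<rho>" "ca_src A (\<rho> 0) \<in> ca_init A"
    using assms by (simp_all add: inf_run_in_iff_seg_path)
  then have "ca_tgt A (\<rho> k) \<in> reach d (Suc k)" using reach_Suc_iff by blast
  moreover have "ca_tgt A (\<rho> k) = ca_src A (\<rho> m)" using assms Suc unfolding inf_run_in_def by simp
  ultimately show ?thesis using Suc by simp
qed

lemma accepting_fin_run_iff:
  "(\<exists>ts. fin_run_in A d (Suc m) ts \<and> fin_run_accepting A ts) \<longleftrightarrow> reach d (Suc m) \<inter> ca_final A \<noteq> {}"
proof
  assume "\<exists>ts. fin_run_in A d (Suc m) ts \<and> fin_run_accepting A ts"
  then obtain ts where ts: "fin_run_in A d (Suc m) ts" "fin_run_accepting A ts" by blast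
  then have "seg_path d 0 (Suc m) (\<lambda>k. ts ! k)" "ca_src A (ts ! 0) \<in> ca_init A" "last ts = ts ! m"
    unfolding fin_run_in_def seg_path_def by (auto simp: last_conv_nth)
  then have "ca_tgt A (last ts) \<in> reach d (Suc m)"
    unfolding reach_Suc_iff by auto
  then show "reach d (Suc m) \<inter> ca_final A \<noteq> {}"
    using ts(2) unfolding fin_run_accepting_def by blast
next
  assume "reach d (Suc m) \<inter> ca_final A \<noteq> {}"
  then obtain s where s: "s \<in> reach d (Suc m)" "s \<in> ca_final A" by blast
  then obtain p where p: "seg_path d 0 (Suc m) p" "ca_src A (p 0) \<in> ca_init A" "ca_tgt A (p m) = s"
    unfolding reach_Suc_iff by blast
  then have "fin_run_in A d (Suc m) (map p [0..<Suc m]) \<and> fin_run_accepting A (map p [0..<Suc m])"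
    using s(2) unfolding fin_run_in_def fin_run_accepting_def seg_path_def
    by (simp del: upt_Suc add: nth_map_upt last_map)
  then show "\<exists>ts. fin_run_in A d (Suc m) ts \<and> fin_run_accepting A ts" by blast
qed

lemma seg_path_append:
  assumes p: "seg_path d i j p" and q: "seg_path d j k q"
    and "i < j" and join: "ca_tgt A (p (j - 1)) = ca_src A (q j)"
  shows "seg_path d i k (\<lambda>m. if m < j then p m else q m)"
  unfolding seg_path_def
proof (intro conjI ballI allI impI)
  fix m assume "m \<in> {i..<k}"
  then show "(if m < j then p m else q m) \<in> d m"
    using p q unfolding seg_path_def by (cases "m < j") auto
next
  fix m assume m: "i \<le> m" "Suc m < k"
  consider "Suc m < j" | "Suc m = j" | "j \<le> m" by linarith
  then show "ca_tgt A (if m < j then p m else q m) = ca_src A (if Suc m < j then p (Suc m) else q (Suc m))"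
  proof cases
    case 1
    then show ?thesis using p m unfolding seg_path_def by simp
  next
    case 2
    then show ?thesis using join by auto
  next
    case 3
    then show ?thesis using q m unfolding seg_path_def by simp
  qed
qed

lemma seg_path_concat_loops:
  assumes H: "infinite H" "b \<in> H"
    and q: "\<And>h. h \<in> H \<Longrightarrow> seg_path d h (next_in H h) (q h)
              \<and> ca_src A (q h h) = s \<and> ca_tgt A (q h (next_in H h - 1)) = s"
  shows "seg_path d b k (\<lambda>m. q (prev_in H m) m)"
  unfolding seg_path_def
proof (intro conjI ballI allI impI)
  fix m assume m: "m \<in> {b..<k}"
  let ?h = "prev_in H m"
  have "?h \<in> H" "?h \<le> m" using prev_in[OF H(2)] m by auto
  moreover have "m < next_in H ?h" by (rule less_next_in_prev_in[OF H(1)])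
  ultimately show "q ?h m \<in> d m" using q[of ?h] unfolding seg_path_def by simp
next
  fix m assume m: "b \<le> m" "Suc m < k"
  let ?h = "prev_in H m"
  have h: "?h \<in> H" "?h \<le> m" "m < next_in H ?h"
    using prev_in[OF H(2) m(1)] less_next_in_prev_in[OF H(1)] by auto
  show "ca_tgt A (q ?h m) = ca_src A (q (prev_in H (Suc m)) (Suc m))"
  proof (cases "Suc m < next_in H ?h")
    case True
    then have "prev_in H (Suc m) = ?h" using prev_in_eqI[OF H(1) h(1), of "Suc m"] h(2) by simp
    moreover have "ca_tgt A (q ?h m) = ca_src A (q ?h (Suc m))"
      using q[OF h(1)] h(2) True unfolding seg_path_def by blast
    ultimately show ?thesis by simp
  next
    case False
    then have next_eq: "next_in H ?h = Suc m" using h(3) by simp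
    then have "Suc m \<in> H" using next_in(1)[OF H(1), of ?h] by simp
    then have "ca_src A (q (prev_in H (Suc m)) (Suc m)) = s" using q prev_in_self by metis
    moreover have "ca_tgt A (q ?h m) = s" using q[OF h(1)] unfolding next_eq by simp
    ultimately show ?thesis by simp
  qed
qed

lemma homogeneous_loop_run:
  assumes H: "infinite H" "b \<in> H" "0 < b"
    and hom: "\<And>x y. x \<in> H \<Longrightarrow> y \<in> H \<Longrightarrow> x < y \<Longrightarrow> seg_profiles d x y = \<tau>"
    and s: "s \<in> reach d b" and loop: "(s, s, R, I) \<in> \<tau>"
  obtains \<rho> where "inf_run_in A d \<rho>" "\<And>c. c \<in> I \<Longrightarrow> \<exists>\<^sub>\<infinity>j. \<rho> j \<in> ca_incr A c"
    "\<And>c j. c \<notin> R \<Longrightarrow> b \<le> j \<Longrightarrow> \<rho> j \<notin> ca_reset A c"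
proof -
  have "\<exists>p. seg_path d h (next_in H h) p \<and> seg_profile p h (next_in H h) = (s, s, R, I)" if "h \<in> H" for h
    using hom[OF that next_in[OF H(1)]] loop unfolding seg_profiles_def by auto
  then obtain q where q: "\<And>h. h \<in> H \<Longrightarrow> seg_path d h (next_in H h) (q h)
      \<and> seg_profile (q h) h (next_in H h) = (s, s, R, I)"
    by metis
  obtain b' where b: "b = Suc b'" using H(3) by (cases b) auto
  obtain p0 where p0: "seg_path d 0 b p0" "ca_src A (p0 0) \<in> ca_init A" "ca_tgt A (p0 b') = s"
    using s unfolding b reach_Suc_iff by blast
  define tail where "tail m = q (prev_in H m) m" for m
  define \<rho> where "\<rho> m = (if m < b then p0 m else tail m)" for m
  have tail_path: "seg_path d b k tail" for k
    unfolding tail_def using q by (intro seg_path_concat_loops[OF H(1,2)]) (auto simp: seg_profile_def)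
  have "ca_src A (tail b) = s" using q[OF H(2)] prev_in_self[OF H(2)] by (simp add: tail_def seg_profile_def)
  then have "seg_path d 0 k \<rho>" for k
    unfolding \<rho>_def using seg_path_append[OF p0(1) tail_path H(3)] p0(3) b by simp
  moreover have "ca_src A (\<rho> 0) \<in> ca_init A" using p0(2) H(3) by (simp add: \<rho>_def)
  ultimately have run: "inf_run_in A d \<rho>" by (simp add: inf_run_in_iff_seg_path)
  have in_segment: "\<rho> m = q h m \<and> h \<le> m \<and> m < next_in H h"
    if "b \<le> m" "h = prev_in H m" for h m
    using that prev_in(2,3)[OF H(2)] less_next_in_prev_in[OF H(1)] by (simp add: \<rho>_def tail_def)
  have "\<exists>\<^sub>\<infinity>j. \<rho> j \<in> ca_incr A c" if "c \<in> I" for c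
    unfolding INFM_nat
  proof
    fix M
    obtain h where h: "h \<in> H" "M + b < h" using H(1) by (meson infinite_nat_iff_unbounded)
    then have "c \<in> seg_incrs (q h) h (next_in H h)" using q that by (simp add: seg_profile_def)
    then obtain m where m: "h \<le> m" "m < next_in H h" "q h m \<in> ca_incr A c"
      unfolding seg_incrs_def by auto
    then have "\<rho> m = q h m" using in_segment[of m h] prev_in_eqI[OF H(1) h(1)] h(2) by simp
    then show "\<exists>m>M. \<rho> m \<in> ca_incr A c" using m h by (intro exI[of _ m]) simp
  qed
  moreover have "\<rho> j \<notin> ca_reset A c" if "c \<notin> R" "b \<le> j" for c j
  proof
    let ?h = "prev_in H j"
    assume "\<rho> j \<in> ca_reset A c"
    then have "c \<in> seg_resets (q ?h) ?h (next_in H ?h)"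
      using in_segment[OF that(2)] unfolding seg_resets_def by auto
    then show False using q[OF prev_in(1)[OF H(2) that(2)]] that(1) by (simp add: seg_profile_def)
  qed
  ultimately show thesis using that run by blast
qed

section \<open>Checkpoint sequences\<close>

definition counter_fair :: "(nat \<Rightarrow> 't set) \<Rightarrow> bool" where
  "counter_fair d \<longleftrightarrow> (\<forall>\<rho>. inf_run_in A d \<rho> \<longrightarrow>
     (\<forall>c \<le> ca_n A. (\<exists>\<^sub>\<infinity>j. \<rho> j \<in> ca_incr A c) \<longrightarrow> (\<exists>\<^sub>\<infinity>j. \<rho> j \<in> ca_reset A c)))"

definition checkpoint_seq :: "(nat \<Rightarrow> 't set) \<Rightarrow> 's profile set \<Rightarrow> (nat \<Rightarrow> 's profile set phase) \<Rightarrow> bool" where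
  "checkpoint_seq d \<tau> ph \<longleftrightarrow> prof_comp \<tau> \<tau> \<subseteq> \<tau> \<and> ph 0 = Initial
     \<and> (\<forall>m. phase_step \<tau> (reach d (Suc m)) (tr_profile ` d m) (ph m) (ph (Suc m)))"

lemma checkpoint_seq_safe:
  assumes "checkpoint_seq d \<tau> ph" "ph m = Checkpoint"
  shows "reach d m \<inter> unbounded_loop_states \<tau> = {}"
proof (cases m)
  case (Suc k)
  then have "phase_step \<tau> (reach d m) (tr_profile ` d k) (ph k) Checkpoint"
    using assms unfolding checkpoint_seq_def by metis
  then show ?thesis by (cases "ph k") auto
qed (use assms in \<open>simp add: checkpoint_seq_def\<close>)

lemma checkpoint_seq_seg_profiles:
  assumes ph: "checkpoint_seq d \<tau> ph" "ph b = Checkpoint" and "b \<le> m"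
  shows "ph m \<noteq> Initial \<and> (ph m = Checkpoint \<longrightarrow> seg_profiles d b m \<subseteq> \<tau>)
    \<and> (\<forall>X. ph m = Segment X \<longrightarrow> seg_profiles d b m \<subseteq> X \<union> prof_comp \<tau> X)"
  using \<open>b \<le> m\<close>
proof (induction m rule: dec_induct)
  case base
  show ?case using ph(2) by (simp add: seg_profiles_def)
next
  case (step m)
  let ?S = "tr_profile ` d m"
  have closed: "prof_comp \<tau> \<tau> \<subseteq> \<tau>"
    and st: "phase_step \<tau> (reach d (Suc m)) ?S (ph m) (ph (Suc m))"
    using ph(1) unfolding checkpoint_seq_def by blast+
  show ?case
  proof (cases "ph m")
    case Initial
    then show ?thesis using step.IH by simp
  next
    case Checkpoint
    have "seg_profiles d b (Suc m) \<subseteq> ?S \<union> prof_comp \<tau> ?S"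
      using step Checkpoint prof_comp_mono[of "seg_profiles d b m" \<tau> ?S ?S]
      by (cases "b = m") (auto simp: seg_profiles_Suc_self seg_profiles_Suc)
    then show ?thesis using st Checkpoint closed by auto
  next
    case (Segment X)
    then have "b < m" using ph(2) step(1) le_neq_implies_less by fastforce
    then have "seg_profiles d b (Suc m) \<subseteq> prof_comp (X \<union> prof_comp \<tau> X) ?S"
      using step.IH Segment prof_comp_mono[of "seg_profiles d b m" _ ?S ?S] by (simp add: seg_profiles_Suc)
    also have "\<dots> = prof_comp X ?S \<union> prof_comp \<tau> (prof_comp X ?S)"
      by (simp add: prof_comp_Un_left prof_comp_assoc)
    finally show ?thesis using st Segment closed by auto
  qed
qed

lemma checkpoint_seq_bounded:
  assumes wf: "cost_aut_wf A" and d: "\<And>m. d m \<subseteq> ca_trans A"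
    and ph: "checkpoint_seq d \<tau> ph" "\<exists>\<^sub>\<infinity>m. ph m = Checkpoint"
    and run: "inf_run_in A d \<rho>" and incr: "\<exists>\<^sub>\<infinity>j. \<rho> j \<in> ca_incr A c"
  shows "\<exists>\<^sub>\<infinity>j. \<rho> j \<in> ca_reset A c"
proof (rule ccontr)
  assume "\<not> (\<exists>\<^sub>\<infinity>j. \<rho> j \<in> ca_reset A c)"
  then obtain N where N: "\<And>j. N < j \<Longrightarrow> \<rho> j \<notin> ca_reset A c" unfolding INFM_nat by auto
  let ?src = "\<lambda>m. ca_src A (\<rho> m)"
  define K where "K = {m. ph m = Checkpoint \<and> N < m}"
  have inf: "infinite K"
    unfolding infinite_nat_iff_unbounded
  proof
    fix M
    obtain m where "M + N < m" "ph m = Checkpoint" using ph(2) unfolding INFM_nat by blast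
    then show "\<exists>m>M. m \<in> K" unfolding K_def by (intro exI[of _ m]) simp
  qed
  have "\<rho> m \<in> ca_trans A" for m using run d unfolding inf_run_in_def by blast
  then have "?src ` K \<subseteq> ca_states A" using cost_aut_wf_trans[OF wf] by blast
  then have fin: "finite (?src ` K)" using cost_aut_wf_finite[OF wf] finite_subset by blast
  obtain s where s: "infinite (?src -` {s} \<inter> K)"
    using inf_img_fin_domE'[OF fin inf] by blast
  obtain b1 where "b1 \<in> ?src -` {s} \<inter> K"
    using infinite_imp_nonempty[OF s] by blast
  then have b1: "b1 \<in> K" "?src b1 = s" by simp_all
  obtain j where j: "b1 < j" "\<rho> j \<in> ca_incr A c" using incr unfolding INFM_nat by blast
  obtain b2 where "j < b2" "b2 \<in> ?src -` {s} \<inter> K"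
    using s unfolding infinite_nat_iff_unbounded by blast
  then have b2: "j < b2" "b2 \<in> K" "?src b2 = s" by simp_all
  have "seg_profile \<rho> b1 b2 \<in> seg_profiles d b1 b2"
    using run j b2 seg_path_mono[of d 0 b2 \<rho> b1 b2] unfolding seg_profiles_def inf_run_in_iff_seg_path by auto
  moreover have "seg_profiles d b1 b2 \<subseteq> \<tau>"
    using checkpoint_seq_seg_profiles[OF ph(1), of b1 b2] b1 b2 j unfolding K_def by simp
  moreover have "ca_tgt A (\<rho> (b2 - 1)) = s"
    using run b2 j unfolding inf_run_in_def by (metis Suc_diff_1 gr_implies_not0 not_gr0)
  moreover have "c \<in> seg_incrs \<rho> b1 b2" "c \<notin> seg_resets \<rho> b1 b2"
    using j b2 N b1 unfolding seg_incrs_def seg_resets_def K_def by auto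
  ultimately have "(s, s, seg_resets \<rho> b1 b2, seg_incrs \<rho> b1 b2) \<in> \<tau>"
    and "\<not> seg_incrs \<rho> b1 b2 \<subseteq> seg_resets \<rho> b1 b2"
    using b1 unfolding seg_profile_def by auto
  then have "s \<in> unbounded_loop_states \<tau>" unfolding unbounded_loop_states_def by blast
  moreover have "s \<in> reach d b1" using inf_run_in_reach[OF run] b1 by blast
  ultimately show False using checkpoint_seq_safe[OF ph(1)] b1 unfolding K_def by blast
qed

definition profile_space :: "'s profile set" where
  "profile_space = ca_states A \<times> ca_states A \<times> Pow {..ca_n A} \<times> Pow {..ca_n A}"

lemma finite_profile_space: "cost_aut_wf A \<Longrightarrow> finite profile_space"
  using cost_aut_wf_finite unfolding profile_space_def by auto

lemma prof_comp_subset_profile_space: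
  "X \<subseteq> profile_space \<Longrightarrow> Y \<subseteq> profile_space \<Longrightarrow> prof_comp X Y \<subseteq> profile_space"
  unfolding profile_space_def by (auto elim!: prof_compE)

lemma tr_profiles_subset_profile_space:
  assumes "cost_aut_wf A" "D \<subseteq> ca_trans A"
  shows "tr_profile ` D \<subseteq> profile_space"
proof
  fix e assume "e \<in> tr_profile ` D"
  then obtain t where t: "t \<in> ca_trans A" "e = tr_profile t" using assms(2) by blast
  have "{c. t \<in> ca_reset A c} \<subseteq> {..ca_n A}" "{c. t \<in> ca_incr A c} \<subseteq> {..ca_n A}"
    using cost_aut_wf_counter[OF assms(1), of t] by auto
  then show "e \<in> profile_space"
    using cost_aut_wf_trans[OF assms(1) t(1)] t(2) unfolding profile_space_def tr_profile_def by simp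
qed

lemma seg_profiles_subset_profile_space:
  assumes wf: "cost_aut_wf A" and d: "\<And>m. d m \<subseteq> ca_trans A"
  shows "seg_profiles d i j \<subseteq> profile_space"
proof
  fix e assume "e \<in> seg_profiles d i j"
  then obtain p where p: "i < j" "seg_path d i j p" "e = seg_profile p i j"
    unfolding seg_profiles_def by blast
  then have "p i \<in> d i" "p (j - 1) \<in> d (j - 1)" unfolding seg_path_def by auto
  then have "p i \<in> ca_trans A" "p (j - 1) \<in> ca_trans A" using d by blast+
  moreover have "seg_resets p i j \<subseteq> {..ca_n A}" "seg_incrs p i j \<subseteq> {..ca_n A}"
    unfolding seg_resets_def seg_incrs_def using cost_aut_wf_counter[OF wf] by blast+
  ultimately show "e \<in> profile_space"
    using cost_aut_wf_trans[OF wf] p(3) unfolding profile_space_def seg_profile_def by simp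
qed

lemma homogeneous_segments:
  assumes "cost_aut_wf A" "\<And>m. d m \<subseteq> ca_trans A"
  obtains H \<tau> where "H \<subseteq> {0<..}" "infinite H"
    "\<And>x y. x \<in> H \<Longrightarrow> y \<in> H \<Longrightarrow> x < y \<Longrightarrow> seg_profiles d x y = \<tau>"
proof -
  \<comment> \<open>positions stay positive, since a checkpoint sequence starts in phase Initial\<close>
  have "infinite {0::nat<..}" by (simp add: infinite_Ioi)
  moreover have "finite (Pow profile_space)" using finite_profile_space[OF assms(1)] by simp
  moreover have "\<And>x y. x \<in> {0<..} \<Longrightarrow> y \<in> {0<..} \<Longrightarrow> x < y \<Longrightarrow> seg_profiles d x y \<in> Pow profile_space"
    using seg_profiles_subset_profile_space[OF assms] by simp
  ultimately show thesis
    using that by (rule Ramsey_ordered_pairs[where g = "seg_profiles d"])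
qed

lemma homogeneous_prof_comp:
  assumes "infinite H" and hom: "\<And>x y. x \<in> H \<Longrightarrow> y \<in> H \<Longrightarrow> x < y \<Longrightarrow> seg_profiles d x y = \<tau>"
  shows "prof_comp \<tau> \<tau> = \<tau>"
proof -
  obtain x y z where H: "x \<in> H" "y \<in> H" "z \<in> H" and "x < y" "y < z"
    using assms(1) by (metis infinite_nat_iff_unbounded)
  have "seg_profiles d x z = prof_comp (seg_profiles d x y) (seg_profiles d y z)"
    using \<open>x < y\<close> \<open>y < z\<close> by (rule seg_profiles_split)
  then show ?thesis using hom[OF H(1,2)] hom[OF H(2,3)] hom[OF H(1,3)] \<open>x < y\<close> \<open>y < z\<close> by simp
qed

lemma counter_fair_homogeneous_safe:
  assumes fair: "counter_fair d"
    and H: "infinite H" "H \<subseteq> {0<..}" "h \<in> H"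
    and hom: "\<And>x y. x \<in> H \<Longrightarrow> y \<in> H \<Longrightarrow> x < y \<Longrightarrow> seg_profiles d x y = \<tau>"
    and \<tau>: "\<tau> \<subseteq> profile_space"
  shows "reach d h \<inter> unbounded_loop_states \<tau> = {}"
proof (rule ccontr)
  assume "reach d h \<inter> unbounded_loop_states \<tau> \<noteq> {}"
  then obtain s R I c where s: "s \<in> reach d h" "(s, s, R, I) \<in> \<tau>" "c \<in> I" "c \<notin> R"
    unfolding unbounded_loop_states_def by blast
  have "0 < h" using H by auto
  obtain \<rho> where \<rho>: "inf_run_in A d \<rho>" "\<And>c. c \<in> I \<Longrightarrow> \<exists>\<^sub>\<infinity>j. \<rho> j \<in> ca_incr A c"
    "\<And>c j. c \<notin> R \<Longrightarrow> h \<le> j \<Longrightarrow> \<rho> j \<notin> ca_reset A c"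
    by (rule homogeneous_loop_run[OF H(1,3) \<open>0 < h\<close> hom s(1,2)]) blast+
  have "c \<le> ca_n A" using s(2,3) \<tau> unfolding profile_space_def by auto
  then have "\<exists>\<^sub>\<infinity>j. \<rho> j \<in> ca_reset A c"
    using fair \<rho>(1) \<rho>(2)[OF s(3)] unfolding counter_fair_def by blast
  then obtain j where "h < j" "\<rho> j \<in> ca_reset A c" unfolding INFM_nat by blast
  then show False using \<rho>(3)[OF s(4)] by simp
qed

lemma homogeneous_checkpoint_seq:
  assumes H: "infinite H" "H \<subseteq> {0<..}"
    and hom: "\<And>x y. x \<in> H \<Longrightarrow> y \<in> H \<Longrightarrow> x < y \<Longrightarrow> seg_profiles d x y = \<tau>"
    and safe: "\<And>h. h \<in> H \<Longrightarrow> reach d h \<inter> unbounded_loop_states \<tau> = {}"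
  obtains ph where "checkpoint_seq d \<tau> ph" "\<exists>\<^sub>\<infinity>m. ph m = Checkpoint"
proof -
  define h0 where "h0 = (LEAST h. h \<in> H)"
  have h0: "h0 \<in> H" "\<And>h. h \<in> H \<Longrightarrow> h0 \<le> h"
    using infinite_imp_nonempty[OF H(1)] unfolding h0_def by (auto intro: LeastI Least_le)
  define ph where "ph m = (if m \<in> H then Checkpoint else if m < h0 then Initial
      else Segment (seg_profiles d (prev_in H m) m))" for m
  have after_start: "phase_step \<tau> Q (tr_profile ` d m) (ph m) ph' \<longleftrightarrow>
      ph' = Segment (seg_profiles d (prev_in H m) (Suc m))
      \<or> seg_profiles d (prev_in H m) (Suc m) = \<tau> \<and> ph' = Checkpoint \<and> Q \<inter> unbounded_loop_states \<tau> = {}"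
    if "h0 \<le> m" for m Q ph'
  proof (cases "m \<in> H")
    case True
    then show ?thesis by (simp add: ph_def prev_in_self seg_profiles_Suc_self)
  next
    case False
    have "prev_in H m \<in> H" "prev_in H m \<le> m" using prev_in[OF h0(1) that] by simp_all
    moreover from this have "prev_in H m \<noteq> m" using False by auto
    ultimately have "prev_in H m < m" by simp
    then show ?thesis using False that by (simp add: ph_def seg_profiles_Suc)
  qed
  have "phase_step \<tau> (reach d (Suc m)) (tr_profile ` d m) (ph m) (ph (Suc m))" for m
  proof -
    consider "Suc m < h0" | "Suc m = h0" | "h0 \<le> m" by linarith
    then show ?thesis
    proof cases
      case 1
      then have "m \<notin> H" "Suc m \<notin> H" using h0(2) by (meson Suc_lessD leD)+
      then show ?thesis using 1 by (simp add: ph_def)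
    next
      case 2
      then have "m \<notin> H" using h0(2) by (metis Suc_n_not_le_n)
      then show ?thesis using 2 h0(1) safe[OF h0(1)] by (simp add: ph_def)
    next
      case 3
      note P = prev_in[OF h0(1) 3]
      show ?thesis
      proof (cases "Suc m \<in> H")
        case True
        then show ?thesis using after_start[OF 3] hom[OF P(1) True] P(3) safe[OF True] by (simp add: ph_def)
      next
        case False
        then show ?thesis using 3 after_start[OF 3] prev_in_Suc[OF h0(1) 3 False] by (simp add: ph_def)
      qed
    qed
  qed
  moreover have "ph 0 = Initial" using H(2) h0(1) by (auto simp: ph_def)
  moreover have "prof_comp \<tau> \<tau> \<subseteq> \<tau>" using homogeneous_prof_comp[OF H(1) hom] by simp
  moreover have "\<exists>\<^sub>\<infinity>m. ph m = Checkpoint"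
    using H(1) unfolding INFM_nat infinite_nat_iff_unbounded by (auto simp: ph_def)
  ultimately show thesis using that unfolding checkpoint_seq_def by blast
qed

lemma counter_fair_iff_checkpoint_seq:
  assumes wf: "cost_aut_wf A" and d_trans: "\<And>m. d m \<subseteq> ca_trans A"
  shows "counter_fair d
    \<longleftrightarrow> (\<exists>\<tau> ph. \<tau> \<subseteq> profile_space \<and> checkpoint_seq d \<tau> ph \<and> (\<exists>\<^sub>\<infinity>m. ph m = Checkpoint))"
proof
  assume fair: "counter_fair d"
  obtain H \<tau> where H: "H \<subseteq> {0<..}" "infinite H"
    and hom: "\<And>x y. x \<in> H \<Longrightarrow> y \<in> H \<Longrightarrow> x < y \<Longrightarrow> seg_profiles d x y = \<tau>"
    by (rule homogeneous_segments[where d = d, OF wf d_trans]) blast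
  obtain x y where "x \<in> H" "y \<in> H" "x < y"
    using H(2) by (metis infinite_nat_iff_unbounded)
  then have \<tau>: "\<tau> \<subseteq> profile_space"
    using hom seg_profiles_subset_profile_space[where d = d, OF wf d_trans] by metis
  then obtain ph where "checkpoint_seq d \<tau> ph" "\<exists>\<^sub>\<infinity>m. ph m = Checkpoint"
    using homogeneous_checkpoint_seq[OF H(2,1) hom] counter_fair_homogeneous_safe[OF fair H(2,1) _ hom]
    by blast
  then show "\<exists>\<tau> ph. \<tau> \<subseteq> profile_space \<and> checkpoint_seq d \<tau> ph \<and> (\<exists>\<^sub>\<infinity>m. ph m = Checkpoint)"
    using \<tau> by blast
qed (use checkpoint_seq_bounded[where d = d, OF wf d_trans] in \<open>auto simp: counter_fair_def\<close>)

end

section \<open>The Buechi automaton\<close>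

definition legal_play :: "('s, 'a, 't) cost_aut \<Rightarrow> (nat \<Rightarrow> 'a) \<Rightarrow> (nat \<Rightarrow> 't set) \<Rightarrow> bool" where
  "legal_play A a d \<longleftrightarrow> (\<forall>i. a i \<in> ca_alph A \<and> d i \<in> B_alph A) \<and> (\<forall>i. \<forall>t \<in> d i. ca_lbl A t = a i)"

definition prefixes_covered :: "('s, 'a, 't) cost_aut \<Rightarrow> (nat, 'a) nfa \<Rightarrow> (nat \<Rightarrow> 'a) \<Rightarrow> (nat \<Rightarrow> 't set) \<Rightarrow> bool" where
  "prefixes_covered A N a d \<longleftrightarrow>
     (\<forall>m. nfa_reach N a (Suc m) \<inter> nfa_final N \<noteq> {} \<longrightarrow> reach A d (Suc m) \<inter> ca_final A \<noteq> {})"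

lemma legal_play_trans: "legal_play A a d \<Longrightarrow> d m \<subseteq> ca_trans A"
  unfolding legal_play_def B_alph_def by blast

lemma fin_run_condition_iff_prefixes_covered:
  "(\<forall>i \<ge> 1. nfa_accepts N (map a [0..<i]) \<longrightarrow> (\<exists>ts. fin_run_in A d i ts \<and> fin_run_accepting A ts))
    \<longleftrightarrow> prefixes_covered A N a d"
proof
  assume fin: "\<forall>i \<ge> 1. nfa_accepts N (map a [0..<i]) \<longrightarrow> (\<exists>ts. fin_run_in A d i ts \<and> fin_run_accepting A ts)"
  show "prefixes_covered A N a d"
    unfolding prefixes_covered_def
  proof (intro allI impI)
    fix m assume "nfa_reach N a (Suc m) \<inter> nfa_final N \<noteq> {}"
    then have "nfa_accepts N (map a [0..<Suc m])" by (rule nfa_accepts_prefix_iff[THEN iffD2])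
    then have "\<exists>ts. fin_run_in A d (Suc m) ts \<and> fin_run_accepting A ts" using fin[rule_format, of "Suc m"] by simp
    then show "reach A d (Suc m) \<inter> ca_final A \<noteq> {}" by (rule accepting_fin_run_iff[THEN iffD1])
  qed
next
  assume cov: "prefixes_covered A N a d"
  show "\<forall>i \<ge> 1. nfa_accepts N (map a [0..<i]) \<longrightarrow> (\<exists>ts. fin_run_in A d i ts \<and> fin_run_accepting A ts)"
  proof (intro allI impI)
    fix i assume "1 \<le> i" and acc: "nfa_accepts N (map a [0..<i])"
    then obtain m where i: "i = Suc m" by (cases i) auto
    have "nfa_reach N a i \<inter> nfa_final N \<noteq> {}" using acc by (rule nfa_accepts_prefix_iff[THEN iffD1])
    then have "reach A d (Suc m) \<inter> ca_final A \<noteq> {}" using cov unfolding prefixes_covered_def i by blast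
    then show "\<exists>ts. fin_run_in A d i ts \<and> fin_run_accepting A ts"
      unfolding i by (rule accepting_fin_run_iff[THEN iffD2])
  qed
qed

lemma win_inf_iff:
  "w \<in> win_inf A {u. nfa_accepts N u} \<longleftrightarrow>
     (\<exists>a d. w = interleave a d \<and> legal_play A a d \<and> counter_fair A d \<and> prefixes_covered A N a d)"
  unfolding win_inf_def mem_Collect_eq fin_run_condition_iff_prefixes_covered
  unfolding legal_play_def counter_fair_def by blast

(* gs_letter is the letter just chosen by player A, which player B's move has to read. *)
datatype ('a, 's) game_state =
  GState (gs_letter: "'a option") (gs_nfa: "nat set") (gs_reach: "'s set")
    (gs_guess: "'s profile set") (gs_phase: "'s profile set phase")

fun game_step :: "('s, 'a, 't) cost_aut \<Rightarrow> (nat, 'a) nfa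
    \<Rightarrow> ('a, 's) game_state \<Rightarrow> 'a + 't set \<Rightarrow> ('a, 's) game_state \<Rightarrow> bool" where
  "game_step A N q (Inl x) q' \<longleftrightarrow> gs_letter q = None
     \<and> q' = GState (Some x) (nfa_post N (gs_nfa q) x) (gs_reach q) (gs_guess q) (gs_phase q)"
| "game_step A N q (Inr D) q' \<longleftrightarrow> (\<exists>x. gs_letter q = Some x \<and> (\<forall>t \<in> D. ca_lbl A t = x))
     \<and> (gs_nfa q \<inter> nfa_final N \<noteq> {} \<longrightarrow> post A (gs_reach q) D \<inter> ca_final A \<noteq> {})
     \<and> (\<exists>ph. q' = GState None (gs_nfa q) (post A (gs_reach q) D) (gs_guess q) ph
           \<and> phase_step (gs_guess q) (post A (gs_reach q) D) (tr_profile A ` D) (gs_phase q) ph)"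

definition game_states :: "('s, 'a, 't) cost_aut \<Rightarrow> (nat, 'a) nfa \<Rightarrow> ('a, 's) game_state set" where
  "game_states A N = {GState ol P Q \<tau> ph | ol P Q \<tau> ph. ol \<in> insert None (Some ` ca_alph A)
     \<and> P \<subseteq> nfa_states N \<and> Q \<subseteq> ca_states A \<and> \<tau> \<subseteq> profile_space A
     \<and> ph \<in> insert Initial (insert Checkpoint (Segment ` Pow (profile_space A)))}"

definition game_buchi :: "('s, 'a, 't) cost_aut \<Rightarrow> (nat, 'a) nfa \<Rightarrow> (('a, 's) game_state, 'a + 't set) buchi" where
  "game_buchi A N = \<lparr>bu_states = game_states A N,
     bu_init = {GState None (nfa_init N) (ca_init A) \<tau> Initial | \<tau>. \<tau> \<subseteq> profile_space A \<and> prof_comp \<tau> \<tau> \<subseteq> \<tau>},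
     bu_trans = {(q, x, q'). q \<in> game_states A N \<and> x \<in> game_alph A \<and> q' \<in> game_states A N \<and> game_step A N q x q'},
     bu_acc = {q \<in> game_states A N. gs_phase q = Checkpoint}\<rparr>"

lemma finite_game_states:
  assumes "cost_aut_wf A" "nfa_wf \<Sigma> N"
  shows "finite (game_states A N)"
proof -
  let ?S = "insert None (Some ` ca_alph A) \<times> Pow (nfa_states N) \<times> Pow (ca_states A) \<times> Pow (profile_space A)
       \<times> insert Initial (insert Checkpoint (Segment ` Pow (profile_space A)))"
  let ?f = "\<lambda>(ol, P, Q, \<tau>, ph). GState ol P Q \<tau> ph"
  have "GState ol P Q \<tau> ph \<in> ?f ` ?S" if "(ol, P, Q, \<tau>, ph) \<in> ?S" for ol P Q \<tau> ph
    using that by (rule rev_image_eqI) simp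
  then have sub: "game_states A N \<subseteq> ?f ` ?S" unfolding game_states_def by auto
  have "finite (nfa_states N)" using assms(2) unfolding nfa_wf_def by blast
  then have "finite (?f ` ?S)"
    using cost_aut_wf_finite[OF assms(1)] finite_profile_space[OF assms(1)] by simp
  with sub show ?thesis by (rule finite_subset)
qed

lemma game_buchi_wf:
  assumes "cost_aut_wf A" "nfa_wf \<Sigma> N"
  shows "buchi_wf (game_alph A) (game_buchi A N)"
proof -
  have "ca_init A \<subseteq> ca_states A" "nfa_init N \<subseteq> nfa_states N"
    using assms unfolding cost_aut_wf_def nfa_wf_def by blast+
  then have "bu_init (game_buchi A N) \<subseteq> game_states A N"
    unfolding game_buchi_def game_states_def by auto
  then show ?thesis
    using finite_game_states[OF assms] unfolding buchi_wf_def by (auto simp: game_buchi_def)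
qed

lemma game_step_None_iff:
  "game_step A N (GState None P Q \<tau> ph) y q' \<longleftrightarrow> (\<exists>x. y = Inl x \<and> q' = GState (Some x) (nfa_post N P x) Q \<tau> ph)"
  by (cases y) auto

lemma game_step_Some_iff:
  "game_step A N (GState (Some x) P Q \<tau> ph) y q' \<longleftrightarrow> (\<exists>D. y = Inr D \<and> (\<forall>t \<in> D. ca_lbl A t = x)
     \<and> (P \<inter> nfa_final N \<noteq> {} \<longrightarrow> post A Q D \<inter> ca_final A \<noteq> {})
     \<and> (\<exists>ph'. q' = GState None P (post A Q D) \<tau> ph' \<and> phase_step \<tau> (post A Q D) (tr_profile A ` D) ph ph'))"
  by (cases y) auto

definition game_run :: "('s, 'a, 't) cost_aut \<Rightarrow> (nat, 'a) nfa \<Rightarrow> (nat \<Rightarrow> 'a) \<Rightarrow> (nat \<Rightarrow> 't set)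
    \<Rightarrow> 's profile set \<Rightarrow> (nat \<Rightarrow> 's profile set phase) \<Rightarrow> nat \<Rightarrow> ('a, 's) game_state" where
  "game_run A N a d \<tau> ph k = (if even k
     then GState None (nfa_reach N a (k div 2)) (reach A d (k div 2)) \<tau> (ph (k div 2))
     else GState (Some (a (k div 2))) (nfa_reach N a (Suc (k div 2))) (reach A d (k div 2)) \<tau> (ph (k div 2)))"

lemma game_run_even:
  "game_run A N a d \<tau> ph (2 * m) = GState None (nfa_reach N a m) (reach A d m) \<tau> (ph m)"
  by (simp add: game_run_def)

lemma game_run_odd:
  "game_run A N a d \<tau> ph (Suc (2 * m)) = GState (Some (a m)) (nfa_reach N a (Suc m)) (reach A d m) \<tau> (ph m)"
  by (simp add: game_run_def)

lemma reach_subset: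
  assumes "cost_aut_wf A" "\<And>m. d m \<subseteq> ca_trans A"
  shows "reach A d m \<subseteq> ca_states A"
  using assms cost_aut_wf_trans[OF assms(1)]
  by (induction m) (auto simp: cost_aut_wf_def post_def)

lemma checkpoint_seq_phase:
  assumes wf: "cost_aut_wf A" and d: "\<And>m. d m \<subseteq> ca_trans A"
    and \<tau>: "\<tau> \<subseteq> profile_space A" and ph: "checkpoint_seq A d \<tau> ph"
  shows "ph m \<in> insert Initial (insert Checkpoint (Segment ` Pow (profile_space A)))"
proof (induction m)
  case 0
  then show ?case using ph by (simp add: checkpoint_seq_def)
next
  case (Suc m)
  have S: "tr_profile A ` d m \<subseteq> profile_space A" using tr_profiles_subset_profile_space[OF wf d] .
  have "phase_step \<tau> (reach A d (Suc m)) (tr_profile A ` d m) (ph m) (ph (Suc m))"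
    using ph by (simp add: checkpoint_seq_def)
  then show ?case using Suc.IH S prof_comp_subset_profile_space[OF _ S] by (cases "ph m") auto
qed

lemma game_run_accepting:
  assumes wf: "cost_aut_wf A" and wfN: "nfa_wf (ca_alph A) N"
    and w: "w = interleave a d" and legal: "legal_play A a d" and cov: "prefixes_covered A N a d"
    and \<tau>: "\<tau> \<subseteq> profile_space A" and ph: "checkpoint_seq A d \<tau> ph" "\<exists>\<^sub>\<infinity>m. ph m = Checkpoint"
  shows "buchi_accepts (game_buchi A N) w"
proof -
  let ?r = "game_run A N a d \<tau> ph"
  have d_trans: "\<And>m. d m \<subseteq> ca_trans A" using legal by (rule legal_play_trans)
  have in_states: "?r k \<in> game_states A N" for k
    using legal nfa_reach_subset[OF wfN] reach_subset[where d = d, OF wf d_trans] \<tau>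
      checkpoint_seq_phase[where d = d, OF wf d_trans \<tau> ph(1)]
    unfolding game_run_def game_states_def legal_play_def by (auto simp del: nfa_reach.simps)
  have "w k \<in> game_alph A" for k
    using legal unfolding w interleave_def game_alph_def legal_play_def by auto
  moreover have "game_step A N (?r k) (w k) (?r (Suc k))" for k
  proof (cases "even k")
    case True
    then obtain m where "k = 2 * m" by blast
    then show ?thesis by (simp add: w interleave_def game_run_def nfa_post_def)
  next
    case False
    then obtain m where k: "k = Suc (2 * m)" by (metis oddE Suc_eq_plus1)
    have "Suc k = 2 * Suc m" using k by simp
    then have "?r (Suc k) = GState None (nfa_reach N a (Suc m)) (reach A d (Suc m)) \<tau> (ph (Suc m))"
      by (simp only: game_run_even)
    moreover have "?r k = GState (Some (a m)) (nfa_reach N a (Suc m)) (reach A d m) \<tau> (ph m)"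
      unfolding k by (rule game_run_odd)
    moreover have "w k = Inr (d m)" using k by (simp add: w interleave_def)
    ultimately show ?thesis
      using legal cov ph(1)
      by (simp add: game_step_Some_iff legal_play_def prefixes_covered_def checkpoint_seq_def)
  qed
  ultimately have "(?r k, w k, ?r (Suc k)) \<in> bu_trans (game_buchi A N)" for k
    using in_states by (simp add: game_buchi_def)
  moreover have "?r 0 \<in> bu_init (game_buchi A N)"
    using \<tau> ph(1) by (simp add: game_buchi_def game_run_def checkpoint_seq_def)
  moreover have "\<exists>\<^sub>\<infinity>k. ?r k \<in> bu_acc (game_buchi A N)"
    using INFM_nat_div_2[THEN iffD2, OF ph(2)] in_states
    by (auto simp: game_buchi_def game_run_def elim!: INFM_mono)
  ultimately show ?thesis unfolding buchi_accepts_def by blast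
qed

lemma game_round:
  assumes "game_step A N (GState None P Q \<tau> ph) y1 q1" "game_step A N q1 y2 q2"
  obtains x D where "y1 = Inl x" "q1 = GState (Some x) (nfa_post N P x) Q \<tau> ph"
    "y2 = Inr D" "q2 = GState None (nfa_post N P x) (post A Q D) \<tau> (gs_phase q2)"
    "\<forall>t \<in> D. ca_lbl A t = x"
    "nfa_post N P x \<inter> nfa_final N \<noteq> {} \<longrightarrow> post A Q D \<inter> ca_final A \<noteq> {}"
    "phase_step \<tau> (post A Q D) (tr_profile A ` D) ph (gs_phase q2)"
proof -
  obtain x where x: "y1 = Inl x" "q1 = GState (Some x) (nfa_post N P x) Q \<tau> ph"
    using assms(1) unfolding game_step_None_iff by blast
  then have "game_step A N (GState (Some x) (nfa_post N P x) Q \<tau> ph) y2 q2" using assms(2) by simp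
  then obtain D ph' where D: "y2 = Inr D" "\<forall>t \<in> D. ca_lbl A t = x"
    "nfa_post N P x \<inter> nfa_final N \<noteq> {} \<longrightarrow> post A Q D \<inter> ca_final A \<noteq> {}"
    and q2: "q2 = GState None (nfa_post N P x) (post A Q D) \<tau> ph'"
      "phase_step \<tau> (post A Q D) (tr_profile A ` D) ph ph'"
    unfolding game_step_Some_iff by blast
  show thesis by (rule that[OF x D(1)]) (use D q2 in simp_all)
qed

lemma accepted_by_game_buchi:
  assumes "buchi_accepts (game_buchi A N) w"
  obtains a d \<tau> ph where "w = interleave a d" "legal_play A a d" "prefixes_covered A N a d"
    "\<tau> \<subseteq> profile_space A" "checkpoint_seq A d \<tau> ph" "\<exists>\<^sub>\<infinity>m. ph m = Checkpoint"
proof -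
  obtain r where r0: "r 0 \<in> bu_init (game_buchi A N)"
    and rt: "\<And>k. (r k, w k, r (Suc k)) \<in> bu_trans (game_buchi A N)"
    and racc: "\<exists>\<^sub>\<infinity>k. r k \<in> bu_acc (game_buchi A N)"
    using assms unfolding buchi_accepts_def by blast
  have step: "game_step A N (r k) (w k) (r (Suc k))" and alph: "w k \<in> game_alph A" for k
    using rt[of k] by (simp_all add: game_buchi_def)
  obtain \<tau> where r_0: "r 0 = GState None (nfa_init N) (ca_init A) \<tau> Initial"
    and \<tau>: "\<tau> \<subseteq> profile_space A" "prof_comp \<tau> \<tau> \<subseteq> \<tau>"
    using r0 by (auto simp: game_buchi_def)
  define a where "a m = (case w (2 * m) of Inl x \<Rightarrow> x | Inr _ \<Rightarrow> undefined)" for m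
  define d where "d m = (case w (Suc (2 * m)) of Inr D \<Rightarrow> D | Inl _ \<Rightarrow> {})" for m
  define ph where "ph m = gs_phase (r (2 * m))" for m
  let ?run = "game_run A N a d \<tau> ph"
  have round: "w (2 * m) = Inl (a m) \<and> r (Suc (2 * m)) = ?run (Suc (2 * m))
      \<and> w (Suc (2 * m)) = Inr (d m) \<and> r (2 * Suc m) = ?run (2 * Suc m)
      \<and> (\<forall>t \<in> d m. ca_lbl A t = a m)
      \<and> (nfa_reach N a (Suc m) \<inter> nfa_final N \<noteq> {} \<longrightarrow> reach A d (Suc m) \<inter> ca_final A \<noteq> {})
      \<and> phase_step \<tau> (reach A d (Suc m)) (tr_profile A ` d m) (ph m) (ph (Suc m))"
    if "r (2 * m) = ?run (2 * m)" for m
  proof -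
    have "game_step A N (GState None (nfa_reach N a m) (reach A d m) \<tau> (ph m)) (w (2 * m)) (r (Suc (2 * m)))"
      using step[of "2 * m"] that by (simp only: game_run_even)
    moreover have "Suc (Suc (2 * m)) = 2 * Suc m" by simp
    ultimately show ?thesis
      using step[of "Suc (2 * m)"]
      by (elim game_round) (auto simp: a_def d_def ph_def game_run_def)
  qed
  have even: "r (2 * m) = ?run (2 * m)" for m
  proof (induction m)
    case 0
    then show ?case using r_0 by (simp add: game_run_def ph_def)
  next
    case (Suc m)
    then show ?case using round by blast
  qed
  note round = round[OF even]
  have interleave: "w = interleave a d"
  proof
    fix k
    show "w k = interleave a d k"
      using round[of "k div 2"] by (cases "even k") (auto simp: interleave_def elim!: oddE evenE)
  qed
  have "a m \<in> ca_alph A \<and> d m \<in> B_alph A" for m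
    using alph[of "2 * m"] alph[of "Suc (2 * m)"] round[of m] unfolding game_alph_def by auto
  then have legal: "legal_play A a d" using round unfolding legal_play_def by blast
  have cov: "prefixes_covered A N a d" using round unfolding prefixes_covered_def by blast
  have "ph 0 = Initial" using r_0 by (simp add: ph_def)
  then have seq: "checkpoint_seq A d \<tau> ph"
    using round \<tau>(2) unfolding checkpoint_seq_def by blast
  have "gs_phase (r k) = ph (k div 2)" for k
    using round[of "k div 2"] even[of "k div 2"] by (cases "even k") (auto simp: game_run_def elim!: oddE evenE)
  then have "\<exists>\<^sub>\<infinity>k. ph (k div 2) = Checkpoint"
    using racc by (auto simp: game_buchi_def elim!: INFM_mono)
  then have "\<exists>\<^sub>\<infinity>m. ph m = Checkpoint" by (rule INFM_nat_div_2[THEN iffD1])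
  then show thesis by (rule that[OF interleave legal cov \<tau>(1) seq])
qed

lemma game_buchi_lang:
  assumes "cost_aut_wf A" "nfa_wf (ca_alph A) N"
  shows "buchi_lang (game_buchi A N) = win_inf A {u. nfa_accepts N u}"
proof (intro set_eqI iffI)
  fix w
  assume "w \<in> buchi_lang (game_buchi A N)"
  then obtain a d \<tau> ph where play: "w = interleave a d" "legal_play A a d" "prefixes_covered A N a d"
    and "\<tau> \<subseteq> profile_space A" "checkpoint_seq A d \<tau> ph" "\<exists>\<^sub>\<infinity>m. ph m = Checkpoint"
    unfolding buchi_lang_def by (auto elim!: accepted_by_game_buchi)
  then have "counter_fair A d"
    using counter_fair_iff_checkpoint_seq[where d = d, OF assms(1) legal_play_trans[OF play(2)]] by blast
  then show "w \<in> win_inf A {u. nfa_accepts N u}" using play unfolding win_inf_iff by blast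
next
  fix w
  assume "w \<in> win_inf A {u. nfa_accepts N u}"
  then obtain a d where play: "w = interleave a d" "legal_play A a d" "prefixes_covered A N a d"
    and "counter_fair A d"
    unfolding win_inf_iff by blast
  then obtain \<tau> ph where "\<tau> \<subseteq> profile_space A" "checkpoint_seq A d \<tau> ph" "\<exists>\<^sub>\<infinity>m. ph m = Checkpoint"
    using counter_fair_iff_checkpoint_seq[where d = d, OF assms(1) legal_play_trans[OF play(2)]] by blast
  then show "w \<in> buchi_lang (game_buchi A N)"
    unfolding buchi_lang_def using game_run_accepting[OF assms play] by blast
qed

theorem lemma3p1:
  fixes A :: "('s, 'a, 't) cost_aut" and L :: "'a list set"
  assumes "cost_aut_wf A"
    and "regular_lang (ca_alph A) L"
  shows "\<exists>B :: (nat, 'a + 't set) buchi.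
           buchi_wf (game_alph A) B \<and> buchi_lang B = win_inf A L"
proof -
  obtain N :: "(nat, 'a) nfa" where N: "nfa_wf (ca_alph A) N" and L: "L = {u. nfa_accepts N u}"
    using assms(2) unfolding regular_lang_def by blast
  obtain B :: "(nat, 'a + 't set) buchi" where "buchi_wf (game_alph A) B"
      and "buchi_lang B = buchi_lang (game_buchi A N)"
    using buchi_nat_states[OF game_buchi_wf[OF assms(1) N]] by blast
  then show ?thesis using game_buchi_lang[OF assms(1) N] L by auto
qed

end
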